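(* There exists a (necessarily discontinuous) map $f:[0,1]\to[0,1]$ such that the chain components poset $(\mathfrak{C}_f,\preceq)$ is order isomorphic to $([0,1]\cap\mathbb{Q},\le)$.
   Context: No regularity is assumed on maps. For a map $f:[0,1]\to[0,1]$ with the usual metric: an $\varepsilon$-chain from $x$ to $y$ is a finite sequence $x_0=x,\dots,x_n=y$, $n\ge1$, with $|f(x_i)-x_{i+1}|<\varepsilon$; $x\,\mathcal{C}\,y$ iff for every $\varepsilon>0$ there is an $\varepsilon$-chain from $x$ to $y$; $CR_f=\{x:x\,\mathcal{C}\,x\}$; $x\,E\,y$ iff $x\,\mathcal{C}\,y$ and $y\,\mathcal{C}\,x$; $\mathfrak{C}_f=CR_f/E$ is the set of chain components, partially ordered by $[x]\preceq[y]$ iff $y\,\mathcal{C}\,x$. *)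

theory Defs
  imports "HOL-Analysis.Analysis"
begin

text \<open>Maps on the unit interval are represented as total functions real => real
  mapping [0,1] into [0,1]; only their values on [0,1] matter. No regularity is assumed.\<close>

definition eps_chain :: "(real \<Rightarrow> real) \<Rightarrow> real \<Rightarrow> real \<Rightarrow> real \<Rightarrow> bool" where
  "eps_chain f e x y \<longleftrightarrow>
     (\<exists>n::nat. n \<ge> 1 \<and> (\<exists>xs :: nat \<Rightarrow> real.
        xs 0 = x \<and> xs n = y \<and> (\<forall>i\<le>n. xs i \<in> {0..1}) \<and>
        (\<forall>i<n. \<bar>f (xs i) - xs (Suc i)\<bar> < e)))"

definition chain_rel :: "(real \<Rightarrow> real) \<Rightarrow> real \<Rightarrow> real \<Rightarrow> bool" where
  "chain_rel f x y \<longleftrightarrow> (\<forall>e>0. eps_chain f e x y)"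

definition chain_recurrent :: "(real \<Rightarrow> real) \<Rightarrow> real set" where
  "chain_recurrent f = {x \<in> {0..1}. chain_rel f x x}"

definition chain_equiv :: "(real \<Rightarrow> real) \<Rightarrow> (real \<times> real) set" where
  "chain_equiv f = {(x, y). x \<in> chain_recurrent f \<and> y \<in> chain_recurrent f \<and>
                            chain_rel f x y \<and> chain_rel f y x}"

definition chain_components :: "(real \<Rightarrow> real) \<Rightarrow> real set set" where
  "chain_components f = chain_recurrent f // chain_equiv f"

text \<open>[x] \<preceq> [y] iff y C x (independent of representatives).\<close>
definition comp_le :: "(real \<Rightarrow> real) \<Rightarrow> real set \<Rightarrow> real set \<Rightarrow> bool" where
  "comp_le f A B \<longleftrightarrow> (\<exists>x\<in>A. \<exists>y\<in>B. chain_rel f y x)"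

end

theory Submission
  imports Defs
begin

text \<open>Enumerate the rationals of \<open>[0,1]\<close> as \<open>q 0, q 1, \<dots>\<close> and put
  \<open>point n = \<Sum>{2^-(k+2) | q k < q n}\<close>. Then \<open>point\<close> is order-isomorphic to \<open>q\<close>, and every
  \<open>point m\<close> is followed by a gap of width \<open>2^-(m+2)\<close> free of other points. The map fixes
  the points, sends everything outside the gaps to \<open>0\<close>, and sends \<open>x\<close> in the gap after
  \<open>point n\<close> to the point labelled by the fractional part of \<open>2^-(n+2) / (x - point n)\<close>
  whenever that label is a rational \<open>\<le> q n\<close>, and to \<open>point n\<close> otherwise. Arbitrarily close
  to \<open>point n\<close> there are thus points mapped onto any lower point, which gives \<open>\<epsilon>\<close>-chains
  downwards. Conversely, the map sends \<open>[0, point n + t)\<close> into \<open>[0, point n]\<close> for every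
  \<open>t\<close> up to the gap width, so small \<open>\<epsilon>\<close>-chains never climb, and no point outside the
  fixed points is chain recurrent. The chain components are therefore the singletons of the
  points, ordered like their labels.\<close>

lemma eps_chain_step:
  assumes "x \<in> {0..1}" "y \<in> {0..1}" "\<bar>f x - y\<bar> < e"
  shows "eps_chain f e x y"
  unfolding eps_chain_def
  by (intro exI[of _ 1] conjI exI[of _ "\<lambda>i. if i = 0 then x else y"]) (use assms in auto)

lemma eps_chain_trans:
  assumes "eps_chain f e x y" "eps_chain f e y z"
  shows "eps_chain f e x z"
proof -
  obtain n xs where n: "n \<ge> 1" "xs 0 = x" "xs n = y" "\<forall>i\<le>n. xs i \<in> {0..1}"
    "\<forall>i<n. \<bar>f (xs i) - xs (Suc i)\<bar> < e"
    using assms(1) unfolding eps_chain_def by blast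
  obtain m ys where m: "m \<ge> 1" "ys 0 = y" "ys m = z" "\<forall>i\<le>m. ys i \<in> {0..1}"
    "\<forall>i<m. \<bar>f (ys i) - ys (Suc i)\<bar> < e"
    using assms(2) unfolding eps_chain_def by blast
  define zs where "zs i = (if i \<le> n then xs i else ys (i - n))" for i
  have "\<bar>f (zs i) - zs (Suc i)\<bar> < e" if "i < n + m" for i
  proof (cases "i < n")
    case True
    then show ?thesis using n(5) by (simp add: zs_def)
  next
    case False
    then have "zs i = ys (i - n)" "zs (Suc i) = ys (Suc (i - n))"
      using n(3) m(2) by (auto simp: zs_def Suc_diff_le)
    then show ?thesis using m(5) that False by simp
  qed
  moreover have "zs i \<in> {0..1}" if "i \<le> n + m" for i
    using n(4) m(4) that by (simp add: zs_def)
  ultimately show ?thesis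
    unfolding eps_chain_def using n m
    by (intro exI[of _ "n + m"] conjI exI[of _ zs]) (auto simp: zs_def)
qed

lemma chain_rel_fixpoint:
  assumes "x \<in> {0..1}" "f x = x"
  shows "chain_rel f x x"
  unfolding chain_rel_def using assms by (auto intro: eps_chain_step)

lemma eps_chain_trapped:
  assumes "eps_chain f e x y"
    and trap: "\<And>z w. z \<in> insert x U \<Longrightarrow> \<bar>f z - w\<bar> < e \<Longrightarrow> w \<in> U"
  shows "y \<in> U"
proof -
  obtain n xs where n: "n \<ge> 1" "xs 0 = x" "xs n = y" "\<forall>i<n. \<bar>f (xs i) - xs (Suc i)\<bar> < e"
    using assms(1) unfolding eps_chain_def by blast
  have "xs (Suc i) \<in> U" if "i < n" for i
    using that
  proof (induction i)
    case 0
    then show ?case using n trap by auto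
  next
    case (Suc i)
    then show ?case using n(4) trap by auto
  qed
  from this[of "n - 1"] show ?thesis using n(1,3) by simp
qed

lemma not_chain_rel_above:
  fixes f :: "real \<Rightarrow> real"
  assumes "t > 0" and below: "\<And>z. z < a + t \<Longrightarrow> f z \<le> a"
    and "f x \<le> a" "a + t \<le> y"
  shows "\<not> chain_rel f x y"
proof
  assume "chain_rel f x y"
  then have "eps_chain f t x y" using \<open>t > 0\<close> unfolding chain_rel_def by blast
  then have "y \<in> {..<a + t}"
  proof (rule eps_chain_trapped)
    fix z w assume "z \<in> insert x {..<a + t}" "\<bar>f z - w\<bar> < t"
    moreover have "f z \<le> a" using calculation(1) below \<open>f x \<le> a\<close> by auto
    ultimately show "w \<in> {..<a + t}" by auto
  qed
  then show False using \<open>a + t \<le> y\<close> by simp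
qed

lemma chain_components_singletons:
  assumes "\<And>x y. x \<in> chain_recurrent f \<Longrightarrow> y \<in> chain_recurrent f \<Longrightarrow>
      chain_rel f x y \<Longrightarrow> chain_rel f y x \<Longrightarrow> x = y"
  shows "chain_components f = (\<lambda>x. {x}) ` chain_recurrent f"
proof -
  have "chain_equiv f = Id_on (chain_recurrent f)"
    using assms by (auto simp: chain_equiv_def chain_recurrent_def)
  then show ?thesis
    unfolding chain_components_def quotient_def by auto
qed

locale unit_rationals_enumeration =
  fixes q :: "nat \<Rightarrow> real"
  assumes enum: "bij_betw q UNIV ({0..1} \<inter> \<rat>)"
begin

lemma q_inject [simp]: "q m = q n \<longleftrightarrow> m = n"
  using enum by (auto simp: bij_betw_def dest: injD)

lemma q_in_unit_rationals: "q n \<in> {0..1} \<inter> \<rat>"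
  using enum by (auto simp: bij_betw_def)

lemma q_inv: "r \<in> {0..1} \<inter> \<rat> \<Longrightarrow> q (inv q r) = r"
  using enum by (metis bij_betw_def f_inv_into_f)

definition wt :: "nat \<Rightarrow> real" where
  "wt k = (1/2) ^ (k + 2)"

definition point :: "nat \<Rightarrow> real" where
  "point n = (\<Sum>k. if q k < q n then wt k else 0)"

definition gap :: "nat \<Rightarrow> real set" where
  "gap n = {point n <..< point n + wt n}"

lemma summable_wt_restrict: "summable (\<lambda>k. if P k then wt k else 0)"
proof (rule summable_comparison_test')
  show "summable wt"
    unfolding wt_def using summable_geometric[of "1/2::real"] by (simp add: summable_mult)
qed (auto simp: wt_def)

lemma suminf_wt: "(\<Sum>k. wt k) = 1/2"
proof -
  have "(\<lambda>k. 1/4 * (1/2::real) ^ k) sums (1/4 * (1 / (1 - 1/2)))"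
    by (intro sums_mult geometric_sums) simp
  then show ?thesis by (simp add: wt_def sums_iff power_add)
qed

lemma wt_pos: "0 < wt n"
  by (simp add: wt_def)

lemma point_nonneg: "0 \<le> point n"
  unfolding point_def by (auto intro!: suminf_nonneg summable_wt_restrict simp: wt_def)

lemma point_wt_le_1: "point n + wt n \<le> 1"
proof -
  have "point n \<le> (\<Sum>k. wt k)"
    unfolding point_def
    using summable_wt_restrict[of "\<lambda>_. True"] by (intro suminf_le summable_wt_restrict) (auto simp: wt_def)
  moreover have "wt n \<le> 1/4"
    unfolding wt_def by (simp add: power_add power_le_one)
  ultimately show ?thesis by (simp add: suminf_wt)
qed

lemma point_in_unit: "point n \<in> {0..1}"
  using point_nonneg[of n] point_wt_le_1[of n] wt_pos[of n] by simp

lemma point_gap_le: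
  assumes "q m < q n"
  shows "point m + wt m \<le> point n"
proof -
  let ?A = "\<lambda>k. if q k < q n then wt k else 0" and ?B = "\<lambda>k. if q k < q m then wt k else 0"
  have "wt m = (\<Sum>k\<in>{m}. ?A k - ?B k)"
    using assms by simp
  also have "\<dots> \<le> (\<Sum>k. ?A k - ?B k)"
    using assms by (intro sum_le_suminf summable_diff summable_wt_restrict) (auto simp: wt_def)
  also have "\<dots> = point n - point m"
    unfolding point_def by (simp add: suminf_diff summable_wt_restrict)
  finally show ?thesis by simp
qed

lemma point_less_imp_q_le:
  assumes "point m < point n + wt n"
  shows "q m \<le> q n"
  using point_gap_le[of n m] assms by force

lemma point_mono: "q m \<le> q n \<Longrightarrow> point m \<le> point n"
  using point_gap_le[of m n] wt_pos[of m] by (cases "q m = q n") auto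

lemma point_inject [simp]: "point m = point n \<longleftrightarrow> m = n"
proof
  assume "point m = point n"
  then have "\<not> q m < q n" "\<not> q n < q m"
    using point_gap_le[of m n] point_gap_le[of n m] wt_pos[of m] wt_pos[of n] by auto
  then show "m = n" by (simp flip: q_inject)
qed simp

lemma point_bottom: "point (inv q 0) = 0"
proof -
  have "\<not> q k < 0" for k
    using q_in_unit_rationals[of k] by simp
  then show ?thesis
    unfolding point_def by (simp add: q_inv)
qed

lemma gap_unique: "x \<in> gap m \<Longrightarrow> x \<in> gap n \<Longrightarrow> m = n"
  unfolding gap_def using point_less_imp_q_le[of m n] point_less_imp_q_le[of n m]
  by (auto simp flip: q_inject)

lemma gap_disjoint_points: "x \<in> gap n \<Longrightarrow> x \<notin> range point"
  unfolding gap_def using point_less_imp_q_le point_mono by fastforce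

definition gap_target :: "nat \<Rightarrow> real \<Rightarrow> nat" where
  "gap_target n x =
     (let s = frac (wt n / (x - point n)) in if s \<in> \<rat> \<and> s \<le> q n then inv q s else n)"

definition chain_map :: "real \<Rightarrow> real" where
  "chain_map x =
     (if x \<in> range point then x
      else if \<exists>n. x \<in> gap n then point (gap_target (SOME n. x \<in> gap n) x)
      else 0)"

lemma q_gap_target_le: "q (gap_target n x) \<le> q n"
proof -
  define s where "s = frac (wt n / (x - point n))"
  have "s \<in> {0..1}"
    using frac_ge_0 by (simp add: s_def less_imp_le[OF frac_lt_1])
  then show ?thesis
    unfolding gap_target_def Let_def s_def[symmetric] by (auto simp: q_inv)
qed

lemma gap_target_eq:
  fixes K :: nat
  assumes "q m < q n" "K \<ge> 2"
  shows "gap_target n (point n + wt n / (K + q m)) = m"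
proof -
  have "0 \<le> q m" "q m < 1" "q m \<in> \<rat>"
    using assms(1) q_in_unit_rationals[of m] q_in_unit_rationals[of n] by auto
  then have "frac (of_nat K + q m) = q m"
    by (simp add: frac_add_int_left)
  moreover have "wt n / (point n + wt n / (K + q m) - point n) = K + q m"
    using assms \<open>0 \<le> q m\<close> by (simp add: wt_def)
  ultimately show ?thesis
    unfolding gap_target_def using assms(1) \<open>q m \<in> \<rat>\<close> by (simp add: inv_f_f inj_def)
qed

lemma chain_map_point [simp]: "chain_map (point n) = point n"
  unfolding chain_map_def by simp

lemma chain_rel_point_refl: "chain_rel chain_map (point n) (point n)"
  by (rule chain_rel_fixpoint[OF point_in_unit]) simp

lemma chain_map_gap: "x \<in> gap n \<Longrightarrow> chain_map x = point (gap_target n x)"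
  unfolding chain_map_def using gap_disjoint_points gap_unique by (metis someI)

lemma chain_map_outside:
  "x \<notin> range point \<Longrightarrow> (\<And>n. x \<notin> gap n) \<Longrightarrow> chain_map x = 0"
  unfolding chain_map_def by simp

lemma chain_map_in_points: "chain_map x \<in> range point"
  unfolding chain_map_def using point_bottom by (auto intro: rangeI)

lemma chain_map_in_unit: "chain_map x \<in> {0..1}"
  using chain_map_in_points[of x] point_in_unit by auto

lemma chain_map_le_point:
  assumes "x < point n + wt n"
  shows "chain_map x \<le> point n"
proof -
  consider (fixed) m where "x = point m" | (gap) m where "x \<in> gap m"
    | (outside) "x \<notin> range point" "\<And>m. x \<notin> gap m"
    by blast
  then show ?thesis
  proof cases
    case fixed
    then show ?thesis using assms point_less_imp_q_le point_mono by simp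
  next
    case gap
    then have "q m \<le> q n"
      using assms point_less_imp_q_le[of m n] by (simp add: gap_def)
    then show ?thesis
      using chain_map_gap[OF gap] q_gap_target_le[of m x] point_mono by force
  next
    case outside
    then show ?thesis using chain_map_outside point_nonneg by simp
  qed
qed

lemma chain_map_below:
  assumes "x \<in> {0..1}" "x \<notin> range point"
  shows "chain_map x < x"
proof (cases "\<exists>n. x \<in> gap n")
  case True
  then obtain n where n: "x \<in> gap n" by blast
  then have "chain_map x \<le> point n"
    by (intro chain_map_le_point) (simp add: gap_def)
  with n show ?thesis by (simp add: gap_def)
next
  case False
  then have "x \<noteq> 0" using assms(2) point_bottom by (metis rangeI)
  then show ?thesis using assms False chain_map_outside by simp
qed

lemma not_chain_rel_beyond:
  assumes "chain_map x \<le> point n" "0 < t" "t \<le> wt n" "point n + t \<le> y"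
  shows "\<not> chain_rel chain_map x y"
proof (rule not_chain_rel_above)
  fix z assume "z < point n + t"
  then show "chain_map z \<le> point n"
    using assms(3) by (intro chain_map_le_point) simp
qed (use assms in auto)

lemma chain_rel_down:
  assumes "q m < q n"
  shows "chain_rel chain_map (point n) (point m)"
  unfolding chain_rel_def
proof (intro allI impI)
  fix e :: real assume "e > 0"
  obtain K0 :: nat where K0: "wt n / e < K0"
    using reals_Archimedean2 by blast
  moreover have "0 < wt n / e"
    using \<open>e > 0\<close> wt_pos[of n] by simp
  ultimately have "0 < real K0" by linarith
  define K where "K = K0 + 2"
  define x where "x = point n + wt n / (K + q m)"
  have "0 \<le> q m" using q_in_unit_rationals[of m] by simp
  have "wt n / (K + q m) \<le> wt n / K0"
    using \<open>0 \<le> q m\<close> \<open>0 < real K0\<close> wt_pos[of n]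
    by (intro divide_left_mono) (auto simp: K_def)
  also have "\<dots> < e"
    using K0 \<open>e > 0\<close> \<open>0 < real K0\<close> by (simp add: field_simps)
  finally have near_point: "\<bar>chain_map (point n) - x\<bar> < e"
    using \<open>0 \<le> q m\<close> by (simp add: x_def K_def wt_def)
  have "x \<in> gap n"
    using \<open>0 \<le> q m\<close> by (simp add: x_def gap_def K_def wt_def divide_less_eq)
  then have hits_point: "chain_map x = point m"
    using chain_map_gap gap_target_eq[OF assms, of K] by (simp add: K_def x_def)
  have "x \<in> {0..1}"
    using \<open>x \<in> gap n\<close> point_nonneg[of n] point_wt_le_1[of n] by (simp add: gap_def)
  then have "eps_chain chain_map e (point n) x" "eps_chain chain_map e x (point m)"
    using near_point hits_point \<open>e > 0\<close> point_in_unit by (auto intro!: eps_chain_step)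
  then show "eps_chain chain_map e (point n) (point m)"
    by (rule eps_chain_trans)
qed

lemma chain_rel_point_iff:
  "chain_rel chain_map (point n) (point m) \<longleftrightarrow> q m \<le> q n"
proof
  assume "chain_rel chain_map (point n) (point m)"
  then show "q m \<le> q n"
    using not_chain_rel_beyond[of "point n" n "wt n" "point m"] point_gap_le[of n m] by (force simp: wt_def)
next
  assume "q m \<le> q n"
  then show "chain_rel chain_map (point n) (point m)"
    using chain_rel_down[of m n] chain_rel_point_refl by (cases "q m = q n") auto
qed

lemma chain_recurrent_chain_map: "chain_recurrent chain_map = range point"
proof -
  have "\<not> chain_rel chain_map x x" if "x \<in> {0..1}" "x \<notin> range point" for x
  proof -
    obtain n where n: "chain_map x = point n"
      using chain_map_in_points by blast
    with chain_map_below[OF that] have "point n < x" by simp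
    then show ?thesis
      using n wt_pos[of n] by (intro not_chain_rel_beyond[of x n "min (x - point n) (wt n)"]) auto
  qed
  then show ?thesis
    unfolding chain_recurrent_def
    using point_in_unit chain_rel_point_refl by auto
qed

lemma chain_components_chain_map: "chain_components chain_map = range (\<lambda>n. {point n})"
proof -
  have "chain_components chain_map = (\<lambda>x. {x}) ` chain_recurrent chain_map"
    by (rule chain_components_singletons)
      (auto simp: chain_recurrent_chain_map chain_rel_point_iff simp flip: q_inject)
  then show ?thesis by (simp add: chain_recurrent_chain_map image_image)
qed

lemma chain_components_order_iso:
  "\<exists>\<phi> :: real set \<Rightarrow> real.
     bij_betw \<phi> (chain_components chain_map) ({0..1} \<inter> \<rat>) \<and>
     (\<forall>A\<in>chain_components chain_map. \<forall>B\<in>chain_components chain_map.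
        comp_le chain_map A B \<longleftrightarrow> \<phi> A \<le> \<phi> B)"
proof (intro exI conjI)
  define \<phi> where "\<phi> A = q (inv point (the_elem A))" for A
  have \<phi>_point: "\<phi> {point n} = q n" for n
    by (simp add: \<phi>_def inv_f_f inj_def)
  have "inj_on \<phi> (range (\<lambda>n. {point n}))"
    by (rule inj_onI) (auto simp: \<phi>_point)
  moreover have "\<phi> ` range (\<lambda>n. {point n}) = {0..1} \<inter> \<rat>"
    using enum by (auto simp: bij_betw_def image_image \<phi>_point)
  ultimately show "bij_betw \<phi> (chain_components chain_map) ({0..1} \<inter> \<rat>)"
    by (simp add: bij_betw_def chain_components_chain_map)
  show "\<forall>A\<in>chain_components chain_map. \<forall>B\<in>chain_components chain_map.
      comp_le chain_map A B \<longleftrightarrow> \<phi> A \<le> \<phi> B"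
    by (auto simp: chain_components_chain_map comp_le_def chain_rel_point_iff \<phi>_point)
qed

end

lemma unit_rationals_enumeration_exists: "\<exists>q. unit_rationals_enumeration q"
proof -
  have "countable ({0..1} \<inter> \<rat> :: real set)"
    using countable_rat by (rule countable_subset[rotated]) auto
  moreover have "infinite ({0..1} \<inter> \<rat> :: real set)"
  proof
    assume "finite ({0..1} \<inter> \<rat> :: real set)"
    moreover have "inj (\<lambda>n::nat. 1 / (real n + 1))"
      by (rule injI) simp
    then have "infinite (range (\<lambda>n::nat. 1 / (real n + 1)))"
      by (rule range_inj_infinite)
    moreover have "range (\<lambda>n::nat. 1 / (real n + 1)) \<subseteq> {0..1} \<inter> \<rat>"
      by auto
    ultimately show False
      using finite_subset by blast
  qed
  ultimately show ?thesis
    using bij_betw_from_nat_into unit_rationals_enumeration.intro by blast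
qed

theorem theorem3p1:
  shows "\<exists>f :: real \<Rightarrow> real. f ` {0..1} \<subseteq> {0..1} \<and>
     (\<exists>\<phi> :: real set \<Rightarrow> real.
        bij_betw \<phi> (chain_components f) ({0..1} \<inter> \<rat>) \<and>
        (\<forall>A\<in>chain_components f. \<forall>B\<in>chain_components f.
            comp_le f A B \<longleftrightarrow> \<phi> A \<le> \<phi> B))"
proof -
  obtain q where "unit_rationals_enumeration q"
    using unit_rationals_enumeration_exists by blast
  then interpret unit_rationals_enumeration q .
  have "chain_map ` {0..1} \<subseteq> {0..1}"
    using chain_map_in_unit by blast
  with chain_components_order_iso show ?thesis by blast
qed

end
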